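(* Let $J:\mathbb{R}_{+}\to\mathbb{R}_{+}$ be continuous with $\int_{\mathbb{Q}_p^n}J(\|x\|_p)\,d^nx=1$, and assume $J(\|x\|_p)$ is of exponential type (with constants $A,B,C_1>0$, $\gamma>-n$). For $t\ge0$ and $x\ne0$ set $$\widetilde{Z}(x,t)=\|x\|_p^{-n}\Big[(1-p^{-n})\sum_{j=0}^{\infty}p^{-nj}e^{(\widehat{J}(p^{-j}\|x\|_p^{-1})-1)t}-e^{(\widehat{J}(p\|x\|_p^{-1})-1)t}\Big].$$ Then: (i) $\widetilde{Z}(x,t)\le 2t\|x\|_p^{-n}$ for all $x\in\mathbb{Q}_p^n\setminus\{0\}$ and $t>0$; (ii) if $-n<\gamma<0$, then for every $l\in\mathbb{Z}$ there is a positive constant $C_0$ (depending on $l$) such that $\widetilde{Z}(x,t)\le C_0t\|x\|_p^{\gamma}e^{-C_1\|x\|_p}$ for all $x$ with $\|x\|_p>p^l$ and all $t>0$.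
   Context: $p$ is a prime, $\|x\|_p=\max_i|x_i|_p$ on $\mathbb{Q}_p^n$, $d^nx$ the Haar measure normalized so that $\mathbb{Z}_p^n$ has measure $1$, $\chi_p$ the standard additive character, and $\widehat{J}(\|\xi\|_p)=\int\chi_p(\xi\cdot x)J(\|x\|_p)\,d^nx$ (a radial real function). $J(\|x\|_p)$ is of exponential type if $A\|x\|_p^{\gamma}e^{-C_1\|x\|_p}\le J(\|x\|_p)\le B\|x\|_p^{\gamma}e^{-C_1\|x\|_p}$ for all $x$, for some positive constants $A,B,C_1$ and real $\gamma>-n$. *)

theory Defs
  imports "HOL-Analysis.Analysis"
begin

text \<open>
  An element of Q_p is represented by its (unique) base-p digit expansion
  x = sum over k of d k * p^k, with digits 0 <= d k < p and d k = 0 for all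
  sufficiently negative k.
\<close>

definition padic :: "nat \<Rightarrow> (int \<Rightarrow> nat) set" where
  "padic p = {d. (\<forall>k. d k < p) \<and> (\<exists>N. \<forall>k<N. d k = 0)}"

definition padic_zero :: "int \<Rightarrow> nat" where
  "padic_zero = (\<lambda>_. 0)"

definition qpn :: "nat \<Rightarrow> nat \<Rightarrow> (nat \<Rightarrow> int \<Rightarrow> nat) set" where
  "qpn p n = {x. (\<forall>i<n. x i \<in> padic p) \<and> (\<forall>i\<ge>n. x i = padic_zero)}"

definition qpn_zero :: "nat \<Rightarrow> int \<Rightarrow> nat" where
  "qpn_zero = (\<lambda>_. padic_zero)"

definition padic_ord :: "(int \<Rightarrow> nat) \<Rightarrow> int" where
  "padic_ord d = (THE v. d v \<noteq> 0 \<and> (\<forall>k<v. d k = 0))"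

definition padic_norm :: "nat \<Rightarrow> (int \<Rightarrow> nat) \<Rightarrow> real" where
  "padic_norm p d = (if d = padic_zero then 0 else real p powr (- real_of_int (padic_ord d)))"

definition qpn_norm :: "nat \<Rightarrow> nat \<Rightarrow> (nat \<Rightarrow> int \<Rightarrow> nat) \<Rightarrow> real" where
  "qpn_norm p n x = Max ((\<lambda>i. padic_norm p (x i)) ` {..<n})"

text \<open>Truncation: the rational number sum of d k * p^k over k < K (a representative of x mod p^K Z_p).\<close>
definition padic_trunc :: "nat \<Rightarrow> (int \<Rightarrow> nat) \<Rightarrow> int \<Rightarrow> real" where
  "padic_trunc p d K = (\<Sum>k\<in>{k. k < K \<and> d k \<noteq> 0}. real (d k) * real p powi k)"

definition real_digit :: "nat \<Rightarrow> real \<Rightarrow> int \<Rightarrow> nat" where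
  "real_digit p q m = nat (\<lfloor>q / real p powi m\<rfloor> mod int p)"

definition ev_val :: "(nat \<Rightarrow> 'a) \<Rightarrow> 'a" where
  "ev_val f = (THE c. eventually (\<lambda>K. f K = c) sequentially)"

text \<open>Field operations of Q_p: the m-th digit of x+y (resp. x*y) is the m-th digit of the sum
  (resp. product) of sufficiently fine truncations.\<close>
definition padic_add :: "nat \<Rightarrow> (int \<Rightarrow> nat) \<Rightarrow> (int \<Rightarrow> nat) \<Rightarrow> (int \<Rightarrow> nat)" where
  "padic_add p x y = (\<lambda>m. ev_val (\<lambda>K. real_digit p (padic_trunc p x (int K) + padic_trunc p y (int K)) m))"

definition padic_mult :: "nat \<Rightarrow> (int \<Rightarrow> nat) \<Rightarrow> (int \<Rightarrow> nat) \<Rightarrow> (int \<Rightarrow> nat)" where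
  "padic_mult p x y = (\<lambda>m. ev_val (\<lambda>K. real_digit p (padic_trunc p x (int K) * padic_trunc p y (int K)) m))"

definition qpn_dot :: "nat \<Rightarrow> nat \<Rightarrow> (nat \<Rightarrow> int \<Rightarrow> nat) \<Rightarrow> (nat \<Rightarrow> int \<Rightarrow> nat) \<Rightarrow> (int \<Rightarrow> nat)" where
  "qpn_dot p n \<xi> x = fold (\<lambda>i acc. padic_add p acc (padic_mult p (\<xi> i) (x i))) [0..<n] padic_zero"

text \<open>Fractional part {y}_p = sum over k<0 of y_k p^k, and the standard additive character
  chi_p(y) = exp(2 pi i {y}_p).\<close>
definition padic_frac :: "nat \<Rightarrow> (int \<Rightarrow> nat) \<Rightarrow> real" where
  "padic_frac p y = padic_trunc p y 0"

definition chi_p :: "nat \<Rightarrow> (int \<Rightarrow> nat) \<Rightarrow> complex" where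
  "chi_p p y = cis (2 * pi * padic_frac p y)"

text \<open>Balls (cylinder sets) a + p^k Z_p^n, of Haar volume p^(-n k).\<close>
definition qpn_ball :: "nat \<Rightarrow> nat \<Rightarrow> (nat \<Rightarrow> int \<Rightarrow> nat) \<Rightarrow> int \<Rightarrow> (nat \<Rightarrow> int \<Rightarrow> nat) set" where
  "qpn_ball p n a k = {x \<in> qpn p n. \<forall>i<n. \<forall>j<k. x i j = a i j}"

definition qpn_balls :: "nat \<Rightarrow> nat \<Rightarrow> (nat \<Rightarrow> int \<Rightarrow> nat) set set" where
  "qpn_balls p n = {qpn_ball p n a k | a k. a \<in> qpn p n}"

definition haar_outer :: "nat \<Rightarrow> nat \<Rightarrow> (nat \<Rightarrow> int \<Rightarrow> nat) set \<Rightarrow> ennreal" where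
  "haar_outer p n S =
     (INF f \<in> {f :: nat \<Rightarrow> (nat \<Rightarrow> int \<Rightarrow> nat) \<times> int.
                 (\<forall>i. fst (f i) \<in> qpn p n) \<and> S \<subseteq> (\<Union>i. qpn_ball p n (fst (f i)) (snd (f i)))}.
        (\<Sum>i. ennreal (real p powr (- real n * real_of_int (snd (f i))))))"

text \<open>Haar measure on Q_p^n on its Borel sigma-algebra (generated by the balls),
  normalised so that Z_p^n has measure 1.\<close>
definition haar :: "nat \<Rightarrow> nat \<Rightarrow> (nat \<Rightarrow> int \<Rightarrow> nat) measure" where
  "haar p n = measure_of (qpn p n) (qpn_balls p n) (haar_outer p n)"

text \<open>Fourier transform of the radial function J(||x||_p), evaluated at ||xi||_p = r
  (it is radial and real-valued).\<close>
definition Jhat :: "nat \<Rightarrow> nat \<Rightarrow> (real \<Rightarrow> real) \<Rightarrow> real \<Rightarrow> real" where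
  "Jhat p n J r =
     (let \<xi> = (SOME \<xi>. \<xi> \<in> qpn p n \<and> qpn_norm p n \<xi> = r) in
      Re (integral\<^sup>L (haar p n) (\<lambda>x. chi_p p (qpn_dot p n \<xi> x) * complex_of_real (J (qpn_norm p n x)))))"

definition Ztilde :: "nat \<Rightarrow> nat \<Rightarrow> (real \<Rightarrow> real) \<Rightarrow> (nat \<Rightarrow> int \<Rightarrow> nat) \<Rightarrow> real \<Rightarrow> real" where
  "Ztilde p n J x t =
     qpn_norm p n x powr (- real n) *
       ((1 - real p powr (- real n)) *
          (\<Sum>j. real p powr (- real n * real j) *
                 exp ((Jhat p n J (real p powr (- real j) * qpn_norm p n x powr (-1)) - 1) * t))
        - exp ((Jhat p n J (real p * qpn_norm p n x powr (-1)) - 1) * t))"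

end

theory Submission
  imports Defs
begin

text \<open>
  Since \<open>Jhat \<le> 1\<close>, every exponential \<open>exp ((Jhat r - 1) t)\<close> is at most \<open>1\<close>, while
  \<open>1 - exp ((b - 1) t) \<le> t (1 - b)\<close>; averaging over the geometric weights \<open>(1 - p^-n) p^(-n j)\<close>
  therefore gives \<open>Z(x,t) \<le> t \<parallel>x\<parallel>^-n (1 - b)\<close> with \<open>b = Jhat (p / \<parallel>x\<parallel>)\<close>.
  The character \<open>chi_p (\<xi> \<cdot> y)\<close> equals \<open>1\<close> whenever \<open>\<parallel>\<xi>\<parallel> \<parallel>y\<parallel> \<le> 1\<close>, so \<open>1 - b\<close>, the integral
  of \<open>(1 - cos) J\<close>, only sees the region \<open>\<parallel>y\<parallel> \<ge> \<parallel>x\<parallel>\<close> and is at most twice the tail integral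
  of \<open>J\<close> over it. The normalisation of \<open>J\<close> bounds this tail by \<open>1\<close>, which is (i). For (ii),
  the shell \<open>\<parallel>y\<parallel> = \<parallel>x\<parallel> p^i\<close> lies in the ball of that radius, of volume at most
  \<open>(\<parallel>x\<parallel> p^i)^n / (1 - p^-n)\<close>; against the exponential decay of \<open>J\<close> the resulting series is a
  constant multiple of \<open>\<parallel>x\<parallel>^(n+\<gamma>) exp (-C\<^sub>1 \<parallel>x\<parallel>)\<close>, uniformly in \<open>\<parallel>x\<parallel> > p^l\<close>.
\<close>

section \<open>Digit arithmetic in Q_p\<close>

definition ppow_multiple :: "nat \<Rightarrow> int \<Rightarrow> real \<Rightarrow> bool" where
  "ppow_multiple p M q \<longleftrightarrow> (\<exists>z::int. q = of_int z * real p powi M)"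

lemma ppow_multiple_0 [simp]: "ppow_multiple p M 0"
  unfolding ppow_multiple_def by (rule exI[of _ 0]) simp

lemma ppow_multiple_add:
  "ppow_multiple p M a \<Longrightarrow> ppow_multiple p M b \<Longrightarrow> ppow_multiple p M (a + b)"
  unfolding ppow_multiple_def by (metis distrib_right of_int_add)

lemma ppow_multiple_mult:
  assumes "p > 0" "ppow_multiple p M a" "ppow_multiple p N b"
  shows "ppow_multiple p (M + N) (a * b)"
proof -
  obtain z w where "a = of_int z * real p powi M" "b = of_int w * real p powi N"
    using assms unfolding ppow_multiple_def by auto
  then have "a * b = of_int (z * w) * real p powi (M + N)"
    using assms(1) by (simp add: power_int_add)
  then show ?thesis unfolding ppow_multiple_def by blast
qed

lemma ppow_multiple_sum:
  "(\<And>k. k \<in> S \<Longrightarrow> ppow_multiple p M (f k)) \<Longrightarrow> ppow_multiple p M (sum f S)"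
  by (induction S rule: infinite_finite_induct) (auto intro: ppow_multiple_add)

lemma ppow_multiple_monomial:
  assumes "p > 0" "M \<le> k" shows "ppow_multiple p M (of_int c * real p powi k)"
proof -
  have "real p powi k = real p powi (k - M) * real p powi M"
    using assms by (simp add: power_int_add[symmetric])
  also have "real p powi (k - M) = real (p ^ nat (k - M))"
    using assms by (metis le_diff_eq diff_ge_0_iff_ge int_nat_eq of_nat_power power_int_of_nat add.commute)
  finally have "of_int c * real p powi k = of_int (c * int (p ^ nat (k - M))) * real p powi M"
    by simp
  then show ?thesis unfolding ppow_multiple_def by blast
qed

lemma real_digit_cong:
  assumes p: "p \<ge> 2" and d: "ppow_multiple p M (q - q')" and m: "m < M"
  shows "real_digit p q m = real_digit p q' m"
proof -
  obtain z where z: "q - q' = of_int z * real p powi M" using d ppow_multiple_def by auto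
  have pm: "real p powi M = real p ^ nat (M - m) * real p powi m"
    using p m by (simp add: power_int_add[symmetric] power_int_of_nat[symmetric])
  have "q / real p powi m = q' / real p powi m + of_int (z * int p ^ nat (M - m))"
    using z p by (simp add: pm field_simps)
  then have fl: "\<lfloor>q / real p powi m\<rfloor> = \<lfloor>q' / real p powi m\<rfloor> + z * int p ^ nat (M - m)"
    using floor_add_int[of "q' / real p powi m" "z * int p ^ nat (M - m)"] by simp
  have e: "int p ^ nat (M - m) = int p ^ (nat (M - m) - 1) * int p"
    using m by (metis Suc_pred' power_Suc2 zero_less_nat_eq diff_gt_0_iff_gt)
  have "(\<lfloor>q' / real p powi m\<rfloor> + z * int p ^ nat (M - m)) mod int p
       = \<lfloor>q' / real p powi m\<rfloor> mod int p"
    unfolding e by (metis mod_mult_self1 mult.assoc)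
  then show ?thesis unfolding real_digit_def fl by simp
qed

lemma real_digit_eq_0:
  assumes "p \<ge> 2" "ppow_multiple p M q" "m < M" shows "real_digit p q m = 0"
  using real_digit_cong[of p M q 0 m] assms by (simp add: real_digit_def)

definition digits_vanish_below :: "(int \<Rightarrow> nat) \<Rightarrow> int \<Rightarrow> bool" where
  "digits_vanish_below d N \<longleftrightarrow> (\<forall>k<N. d k = 0)"

definition digits_agree_below :: "int \<Rightarrow> (int \<Rightarrow> nat) \<Rightarrow> (int \<Rightarrow> nat) \<Rightarrow> bool" where
  "digits_agree_below M d d' \<longleftrightarrow> (\<forall>k<M. d k = d' k)"

lemma digits_vanish_below_mono:
  "digits_vanish_below d N \<Longrightarrow> N' \<le> N \<Longrightarrow> digits_vanish_below d N'"
  unfolding digits_vanish_below_def by auto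

lemma digits_vanish_below_padic_zero [simp]: "digits_vanish_below padic_zero N"
  unfolding digits_vanish_below_def padic_zero_def by simp

lemma padic_digits_vanish_below: "d \<in> padic p \<Longrightarrow> \<exists>N. digits_vanish_below d N"
  unfolding padic_def digits_vanish_below_def by auto

lemma padic_trunc_eq_sum:
  assumes "digits_vanish_below d N"
  shows "padic_trunc p d K = (\<Sum>k\<in>{N..<K}. real (d k) * real p powi k)"
  unfolding padic_trunc_def
  by (rule sum.mono_neutral_left)
     (use assms in \<open>auto simp: digits_vanish_below_def not_less[symmetric]\<close>)

lemma ppow_multiple_padic_trunc:
  assumes "p > 0" "digits_vanish_below d N" shows "ppow_multiple p N (padic_trunc p d K)"
  unfolding padic_trunc_eq_sum[OF assms(2)]
  by (rule ppow_multiple_sum) (use ppow_multiple_monomial[OF assms(1), of N _ "int (d _)"] in auto)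

lemma ppow_multiple_padic_trunc_diff:
  assumes "p > 0" "digits_vanish_below d N" "digits_vanish_below d' N" "digits_agree_below M d d'"
  shows "ppow_multiple p M (padic_trunc p d K - padic_trunc p d' K)"
proof -
  have "padic_trunc p d K - padic_trunc p d' K =
        (\<Sum>k\<in>{N..<K}. of_int (int (d k) - int (d' k)) * real p powi k)"
    unfolding padic_trunc_eq_sum[OF assms(2)] padic_trunc_eq_sum[OF assms(3)] sum_subtractf[symmetric]
    by (simp add: algebra_simps)
  also have "ppow_multiple p M \<dots>"
  proof (rule ppow_multiple_sum)
    fix k
    show "ppow_multiple p M (of_int (int (d k) - int (d' k)) * real p powi k)"
      using assms(4) ppow_multiple_monomial[OF assms(1), of M k "int (d k) - int (d' k)"]
      by (cases "k < M") (auto simp: digits_agree_below_def)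
  qed
  finally show ?thesis .
qed

lemma ev_val_cong:
  assumes "eventually (\<lambda>K. f K = g K) sequentially" shows "ev_val f = ev_val g"
proof -
  have "eventually (\<lambda>K. f K = c) sequentially = eventually (\<lambda>K. g K = c) sequentially" for c
    using assms by (auto elim: eventually_elim2)
  then show ?thesis unfolding ev_val_def by simp
qed

lemma ev_val_const:
  assumes "\<And>K. f K = c" shows "ev_val f = c"
  unfolding ev_val_def
proof (rule the_equality)
  show "eventually (\<lambda>K. f K = c) sequentially" using assms by simp
  fix c' assume "eventually (\<lambda>K. f K = c') sequentially"
  then obtain N where "\<And>K. K \<ge> N \<Longrightarrow> f K = c'" by (auto simp: eventually_sequentially)
  then show "c' = c" using assms[of N] by simp
qed

lemma padic_add_digits_vanish_below:
  assumes "p \<ge> 2" "digits_vanish_below x N" "digits_vanish_below y N"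
  shows "digits_vanish_below (padic_add p x y) N"
  unfolding digits_vanish_below_def padic_add_def
proof (intro allI impI ev_val_const)
  fix k K assume "k < N"
  have "ppow_multiple p N (padic_trunc p x (int K) + padic_trunc p y (int K))"
    using assms by (intro ppow_multiple_add ppow_multiple_padic_trunc) auto
  then show "real_digit p (padic_trunc p x (int K) + padic_trunc p y (int K)) k = 0"
    using real_digit_eq_0 assms(1) \<open>k < N\<close> by blast
qed

lemma padic_add_digits_agree_below:
  assumes "p \<ge> 2" "digits_vanish_below x N" "digits_vanish_below y N"
    "digits_vanish_below x' N" "digits_vanish_below y' N"
    "digits_agree_below M x x'" "digits_agree_below M y y'"
  shows "digits_agree_below M (padic_add p x y) (padic_add p x' y')"
  unfolding digits_agree_below_def padic_add_def
proof (intro allI impI ev_val_cong always_eventually)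
  fix k K assume "k < M"
  have "ppow_multiple p M ((padic_trunc p x (int K) + padic_trunc p y (int K)) -
                  (padic_trunc p x' (int K) + padic_trunc p y' (int K)))"
    using ppow_multiple_add[OF ppow_multiple_padic_trunc_diff[of p x N x' M "int K"]
        ppow_multiple_padic_trunc_diff[of p y N y' M "int K"]] assms
    by (simp add: algebra_simps)
  then show "real_digit p (padic_trunc p x (int K) + padic_trunc p y (int K)) k =
             real_digit p (padic_trunc p x' (int K) + padic_trunc p y' (int K)) k"
    using real_digit_cong assms(1) \<open>k < M\<close> by blast
qed

lemma padic_mult_digits_vanish_below:
  assumes "p \<ge> 2" "digits_vanish_below x N1" "digits_vanish_below y N2"
  shows "digits_vanish_below (padic_mult p x y) (N1 + N2)"
  unfolding digits_vanish_below_def padic_mult_def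
proof (intro allI impI ev_val_const)
  fix k K assume "k < N1 + N2"
  have "ppow_multiple p (N1 + N2) (padic_trunc p x (int K) * padic_trunc p y (int K))"
    using assms by (intro ppow_multiple_mult ppow_multiple_padic_trunc) auto
  then show "real_digit p (padic_trunc p x (int K) * padic_trunc p y (int K)) k = 0"
    using real_digit_eq_0 assms(1) \<open>k < N1 + N2\<close> by blast
qed

lemma padic_mult_digits_agree_below:
  assumes "p \<ge> 2" "digits_vanish_below x N1" "digits_vanish_below y N" "digits_vanish_below y' N"
    "digits_agree_below M y y'"
  shows "digits_agree_below (N1 + M) (padic_mult p x y) (padic_mult p x y')"
  unfolding digits_agree_below_def padic_mult_def
proof (intro allI impI ev_val_cong always_eventually)
  fix k K assume "k < N1 + M"
  have "ppow_multiple p (N1 + M)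
          (padic_trunc p x (int K) * (padic_trunc p y (int K) - padic_trunc p y' (int K)))"
    using assms by (intro ppow_multiple_mult ppow_multiple_padic_trunc ppow_multiple_padic_trunc_diff) auto
  then show "real_digit p (padic_trunc p x (int K) * padic_trunc p y (int K)) k =
             real_digit p (padic_trunc p x (int K) * padic_trunc p y' (int K)) k"
    using real_digit_cong assms(1) \<open>k < N1 + M\<close> by (simp add: algebra_simps)
qed

lemma fold_padic_add_digits_agree_below:
  assumes "p \<ge> 2"
    and "\<And>i. i \<in> set xs \<Longrightarrow> digits_vanish_below (F i) N \<and> digits_vanish_below (G i) N \<and>
                            digits_agree_below M (F i) (G i)"
    and "digits_vanish_below a N" "digits_vanish_below b N" "digits_agree_below M a b"
  shows "digits_vanish_below (fold (\<lambda>i acc. padic_add p acc (F i)) xs a) N \<and>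
         digits_vanish_below (fold (\<lambda>i acc. padic_add p acc (G i)) xs b) N \<and>
         digits_agree_below M (fold (\<lambda>i acc. padic_add p acc (F i)) xs a)
                              (fold (\<lambda>i acc. padic_add p acc (G i)) xs b)"
  using assms(2-)
proof (induction xs arbitrary: a b)
  case (Cons i xs)
  then show ?case
    using Cons.IH[of "padic_add p a (F i)" "padic_add p b (G i)"]
      padic_add_digits_vanish_below[OF assms(1)] padic_add_digits_agree_below[OF assms(1)]
    by simp
qed simp

section \<open>Valuation, norm and the additive character\<close>

lemma ex_common_digits_vanish_below:
  fixes n :: nat
  assumes "\<And>i. i < n \<Longrightarrow> \<exists>N. digits_vanish_below (f i) N"
  shows "\<exists>N. \<forall>i<n. digits_vanish_below (f i) N"
  using assms
proof (induction n)
  case (Suc n)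
  obtain N where N: "\<forall>i<n. digits_vanish_below (f i) N" using Suc by auto
  obtain N' where N': "digits_vanish_below (f n) N'" using Suc.prems by auto
  have "\<forall>i<Suc n. digits_vanish_below (f i) (min N N')"
    using N N' digits_vanish_below_mono by (metis less_Suc_eq min.cobounded1 min.cobounded2)
  then show ?case by blast
qed simp

lemma qpn_digits_vanish_below:
  "x \<in> qpn p n \<Longrightarrow> \<exists>N. \<forall>i<n. digits_vanish_below (x i) N"
  by (intro ex_common_digits_vanish_below padic_digits_vanish_below) (auto simp: qpn_def)

lemma padic_ord_spec:
  assumes "d \<in> padic p" "d \<noteq> padic_zero"
  shows "d (padic_ord d) \<noteq> 0" "digits_vanish_below d (padic_ord d)"
proof -
  obtain N where N: "\<forall>k<N. d k = 0" using assms(1) unfolding padic_def by auto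
  obtain k0 where k0: "d k0 \<noteq> 0" using assms(2) unfolding padic_zero_def by auto
  have "k0 \<ge> N" using N k0 by (meson not_le)
  then have ex: "\<exists>j::nat. d (N + int j) \<noteq> 0" using k0 by (intro exI[of _ "nat (k0 - N)"]) simp
  define v where "v = N + int (LEAST j::nat. d (N + int j) \<noteq> 0)"
  have dv: "d v \<noteq> 0" unfolding v_def using LeastI_ex[OF ex] .
  have zv: "\<forall>k<v. d k = 0"
  proof (intro allI impI)
    fix k assume "k < v"
    show "d k = 0"
    proof (cases "k < N")
      case False
      then have "nat (k - N) < (LEAST j::nat. d (N + int j) \<noteq> 0)" using \<open>k < v\<close> v_def by auto
      then show ?thesis using False not_less_Least by fastforce
    qed (use N in simp)
  qed
  have "padic_ord d = v"
    unfolding padic_ord_def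
  proof (rule the_equality)
    fix w assume w: "d w \<noteq> 0 \<and> (\<forall>k<w. d k = 0)"
    show "w = v" using w dv zv by (cases "w < v"; cases "v < w") auto
  qed (use dv zv in simp)
  then show "d (padic_ord d) \<noteq> 0" "digits_vanish_below d (padic_ord d)"
    using dv zv unfolding digits_vanish_below_def by simp_all
qed

lemma padic_norm_nonzero:
  "d \<noteq> padic_zero \<Longrightarrow> padic_norm p d = real p powr (- real_of_int (padic_ord d))"
  unfolding padic_norm_def by simp

lemma padic_norm_le_qpn_norm:
  assumes "i < n" shows "padic_norm p (x i) \<le> qpn_norm p n x"
  unfolding qpn_norm_def using assms by (intro Max_ge) auto

lemma qpn_norm_attained:
  assumes "n \<ge> 1" obtains i where "i < n" "qpn_norm p n x = padic_norm p (x i)"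
proof -
  have "qpn_norm p n x \<in> (\<lambda>i. padic_norm p (x i)) ` {..<n}"
    unfolding qpn_norm_def using assms by (intro Max_in) (auto simp: lessThan_empty_iff)
  then show ?thesis using that by auto
qed

lemma qpn_norm_qpn_zero: "n \<ge> 1 \<Longrightarrow> qpn_norm p n qpn_zero = 0"
  by (metis qpn_norm_attained padic_norm_def qpn_zero_def)

lemma qpn_zero_in_qpn: "p > 0 \<Longrightarrow> qpn_zero \<in> qpn p n"
  unfolding qpn_def qpn_zero_def padic_def padic_zero_def by auto

lemma qpn_nonzero_component:
  assumes "x \<in> qpn p n" "x \<noteq> qpn_zero" obtains i where "i < n" "x i \<noteq> padic_zero"
proof -
  have "x = qpn_zero" if "\<forall>i<n. x i = padic_zero"
  proof
    fix i show "x i = qpn_zero i"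
      using that assms(1) by (cases "i < n") (auto simp: qpn_def qpn_zero_def)
  qed
  then show ?thesis using that assms(2) by blast
qed

lemma qpn_norm_power_of_p:
  assumes p: "p \<ge> 2" and n: "n \<ge> 1" and x: "x \<in> qpn p n" "x \<noteq> qpn_zero"
  obtains v :: int where "qpn_norm p n x = real p powr real_of_int v"
proof -
  obtain i where i: "i < n" "x i \<noteq> padic_zero" using qpn_nonzero_component[OF x] .
  have "0 < padic_norm p (x i)" using i p by (simp add: padic_norm_nonzero)
  also have "\<dots> \<le> qpn_norm p n x" using padic_norm_le_qpn_norm i by blast
  finally have pos: "qpn_norm p n x > 0" .
  obtain j where j: "j < n" "qpn_norm p n x = padic_norm p (x j)" using qpn_norm_attained n .
  then have "x j \<noteq> padic_zero" using pos unfolding padic_norm_def by auto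
  then show ?thesis using j that[of "- padic_ord (x j)"] by (simp add: padic_norm_nonzero)
qed

lemma qpn_norm_pos:
  assumes "p \<ge> 2" "n \<ge> 1" "x \<in> qpn p n" "x \<noteq> qpn_zero" shows "qpn_norm p n x > 0"
proof -
  obtain v where "qpn_norm p n x = real p powr real_of_int v" using qpn_norm_power_of_p[OF assms] .
  then show ?thesis using assms(1) by simp
qed

lemma ex_qpn_norm_eq_power:
  assumes p: "p \<ge> 2" and n: "n \<ge> 1"
  shows "\<exists>\<xi>. \<xi> \<in> qpn p n \<and> qpn_norm p n \<xi> = real p powr real_of_int w"
proof -
  define e :: "int \<Rightarrow> nat" where "e = (\<lambda>j. if j = - w then 1 else 0)"
  define \<xi> where "\<xi> = (\<lambda>i::nat. if i = 0 then e else padic_zero)"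
  have e: "e \<in> padic p" "e \<noteq> padic_zero"
    unfolding e_def padic_def padic_zero_def using p by (auto intro!: exI[of _ "- w"] simp: fun_eq_iff)
  have "padic_ord e = - w" using padic_ord_spec(1)[OF e] by (auto simp: e_def split: if_splits)
  then have ne: "padic_norm p e = real p powr real_of_int w" using padic_norm_nonzero[OF e(2)] by simp
  have "\<xi> \<in> qpn p n" unfolding qpn_def \<xi>_def using e n by (auto simp: padic_def padic_zero_def)
  moreover have "qpn_norm p n \<xi> = real p powr real_of_int w"
  proof -
    obtain i where i: "i < n" "qpn_norm p n \<xi> = padic_norm p (\<xi> i)" using qpn_norm_attained[OF n] .
    have "padic_norm p (\<xi> 0) \<le> qpn_norm p n \<xi>" using padic_norm_le_qpn_norm n by simp
    then show ?thesis using i ne p by (cases "i = 0") (auto simp: \<xi>_def padic_norm_def)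
  qed
  ultimately show ?thesis by blast
qed

lemma digits_vanish_below_of_qpn_norm_le:
  assumes p: "p \<ge> 2" and x: "x \<in> qpn p n" and i: "i < n"
    and le: "qpn_norm p n x \<le> real p powr real_of_int m"
  shows "digits_vanish_below (x i) (- m)"
proof (cases "x i = padic_zero")
  case False
  have xi: "x i \<in> padic p" using x i by (simp add: qpn_def)
  have "real p powr (- real_of_int (padic_ord (x i))) \<le> real p powr real_of_int m"
    using padic_norm_le_qpn_norm[OF i, of p x] padic_norm_nonzero[OF False] le by simp
  then have "- m \<le> padic_ord (x i)" using p by (subst (asm) powr_le_cancel_iff) auto
  then show ?thesis using padic_ord_spec(2)[OF xi False] digits_vanish_below_mono by blast
qed simp

lemma powr_neg_padic_ord_le_qpn_norm:
  assumes p: "p \<ge> 2" and x: "x \<in> qpn p n" and i: "i < n" and xi: "x i \<noteq> padic_zero"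
  shows "real p powr (- real_of_int (padic_ord (x i))) \<le> qpn_norm p n x"
  using padic_norm_le_qpn_norm[OF i, of p x] padic_norm_nonzero[OF xi, of p] by simp

text \<open>The orders of the two components add up to a nonnegative number.\<close>
lemma padic_mult_digits_vanish_below_0:
  assumes p: "p \<ge> 2" and \<xi>: "\<xi> \<in> qpn p n" and y: "y \<in> qpn p n" and i: "i < n"
    and le: "qpn_norm p n \<xi> * qpn_norm p n y \<le> 1"
  shows "digits_vanish_below (padic_mult p (\<xi> i) (y i)) 0"
proof -
  have pad: "\<xi> i \<in> padic p" "y i \<in> padic p" using \<xi> y i by (auto simp: qpn_def)
  consider "\<xi> i = padic_zero" | "y i = padic_zero" | "\<xi> i \<noteq> padic_zero" "y i \<noteq> padic_zero" by blast
  then show ?thesis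
  proof cases
    case 1
    obtain N where "digits_vanish_below (y i) N" using padic_digits_vanish_below pad(2) by blast
    then show ?thesis using padic_mult_digits_vanish_below[OF p, of "\<xi> i" "-N" "y i" N] 1 by simp
  next
    case 2
    obtain N where "digits_vanish_below (\<xi> i) N" using padic_digits_vanish_below pad(1) by blast
    then show ?thesis using padic_mult_digits_vanish_below[OF p, of "\<xi> i" N "y i" "-N"] 2 by simp
  next
    case 3
    define o1 where "o1 = padic_ord (\<xi> i)"
    define o2 where "o2 = padic_ord (y i)"
    have "real p powr (- real_of_int o1) * real p powr (- real_of_int o2)
          \<le> qpn_norm p n \<xi> * qpn_norm p n y"
      using powr_neg_padic_ord_le_qpn_norm[OF p \<xi> i 3(1)] powr_neg_padic_ord_le_qpn_norm[OF p y i 3(2)]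
      unfolding o1_def o2_def by (intro mult_mono) (auto intro: order_trans[OF powr_ge_zero])
    then have "real p powr (- real_of_int (o1 + o2)) \<le> real p powr 0"
      using le by (simp add: powr_add[symmetric])
    then have "o1 + o2 \<ge> 0" using p by (subst (asm) powr_le_cancel_iff) auto
    then show ?thesis
      using padic_mult_digits_vanish_below[OF p padic_ord_spec(2)[OF pad(1) 3(1)] padic_ord_spec(2)[OF pad(2) 3(2)]]
        digits_vanish_below_mono unfolding o1_def o2_def by blast
  qed
qed

lemma chi_p_qpn_dot_eq_1:
  assumes p: "p \<ge> 2" and \<xi>: "\<xi> \<in> qpn p n" and y: "y \<in> qpn p n"
    and le: "qpn_norm p n \<xi> * qpn_norm p n y \<le> 1"
  shows "chi_p p (qpn_dot p n \<xi> y) = 1"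
proof -
  have "digits_vanish_below (qpn_dot p n \<xi> y) 0"
    unfolding qpn_dot_def
    using fold_padic_add_digits_agree_below[OF p, of "[0..<n]" "\<lambda>i. padic_mult p (\<xi> i) (y i)" 0
        "\<lambda>i. padic_mult p (\<xi> i) (y i)" 0 padic_zero padic_zero]
      padic_mult_digits_vanish_below_0[OF p \<xi> y _ le]
    by (simp add: digits_agree_below_def)
  then show ?thesis
    by (simp add: chi_p_def padic_frac_def padic_trunc_def digits_vanish_below_def)
qed

lemma chi_p_qpn_dot_locally_constant:
  assumes p: "p \<ge> 2" and \<xi>: "\<xi> \<in> qpn p n"
  obtains M where "\<And>y y'. y \<in> qpn p n \<Longrightarrow> y' \<in> qpn p n \<Longrightarrow> \<forall>i<n. digits_agree_below M (y i) (y' i) \<Longrightarrow>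
            chi_p p (qpn_dot p n \<xi> y) = chi_p p (qpn_dot p n \<xi> y')"
proof -
  obtain N1 where N1: "\<forall>i<n. digits_vanish_below (\<xi> i) N1" using qpn_digits_vanish_below[OF \<xi>] ..
  have "chi_p p (qpn_dot p n \<xi> y) = chi_p p (qpn_dot p n \<xi> y')"
    if y: "y \<in> qpn p n" and y': "y' \<in> qpn p n" and ag: "\<forall>i<n. digits_agree_below (-N1) (y i) (y' i)"
    for y y'
  proof -
    obtain a where a: "\<forall>i<n. digits_vanish_below (y i) a" using qpn_digits_vanish_below[OF y] ..
    obtain b where b: "\<forall>i<n. digits_vanish_below (y' i) b" using qpn_digits_vanish_below[OF y'] ..
    define N2 where "N2 = min a b"
    have N2: "\<forall>i<n. digits_vanish_below (y i) N2 \<and> digits_vanish_below (y' i) N2"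
      using a b digits_vanish_below_mono unfolding N2_def by (meson min.cobounded1 min.cobounded2)
    have "digits_agree_below 0 (qpn_dot p n \<xi> y) (qpn_dot p n \<xi> y')"
      unfolding qpn_dot_def
      using fold_padic_add_digits_agree_below[OF p, of "[0..<n]" "\<lambda>i. padic_mult p (\<xi> i) (y i)"
          "N1 + N2" "\<lambda>i. padic_mult p (\<xi> i) (y' i)" 0 padic_zero padic_zero]
        padic_mult_digits_vanish_below[OF p, of "\<xi> _" N1 _ N2]
        padic_mult_digits_agree_below[OF p, of "\<xi> _" N1 _ N2 _ "-N1"] N1 N2 ag
      by (simp add: digits_agree_below_def)
    then have "padic_frac p (qpn_dot p n \<xi> y) = padic_frac p (qpn_dot p n \<xi> y')"
      unfolding padic_frac_def padic_trunc_def digits_agree_below_def by (intro sum.cong) auto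
    then show ?thesis unfolding chi_p_def by simp
  qed
  then show ?thesis using that by blast
qed

section \<open>Haar measure\<close>

lemma qpn_balls_subset_Pow: "qpn_balls p n \<subseteq> Pow (qpn p n)"
  unfolding qpn_balls_def qpn_ball_def by auto

lemma space_haar: "space (haar p n) = qpn p n"
  unfolding haar_def by (rule space_measure_of[OF qpn_balls_subset_Pow])

lemma qpn_ball_in_sets_haar: "a \<in> qpn p n \<Longrightarrow> qpn_ball p n a k \<in> sets (haar p n)"
  unfolding haar_def sets_measure_of[OF qpn_balls_subset_Pow]
  by (intro sigma_sets.Basic) (auto simp: qpn_balls_def)

lemma qpn_ball_of_qpn_norm_le:
  assumes "p \<ge> 2" "y \<in> qpn p n" "qpn_norm p n y \<le> real p powr real_of_int m"
  shows "y \<in> qpn_ball p n qpn_zero (- m)"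
  using digits_vanish_below_of_qpn_norm_le[OF assms(1,2) _ assms(3)] assms(2)
  by (auto simp: qpn_ball_def digits_vanish_below_def qpn_zero_def padic_zero_def)

text \<open>The measure is only known through covers, whence the factor \<open>1 / (1 - p^-n)\<close>: the ball is
  covered by the balls of radii \<open>p^-k, p^(-k-1), \<dots>\<close> around its centre.\<close>
lemma emeasure_qpn_ball_le:
  assumes p: "p \<ge> 2" and n: "n \<ge> 1" and a: "a \<in> qpn p n"
  shows "emeasure (haar p n) (qpn_ball p n a k) \<le>
         ennreal (real p powr (- real n * real_of_int k) / (1 - real p powr (- real n)))"
proof -
  define q where "q = real p powr (- real n)"
  have q: "0 \<le> q" "q < 1" unfolding q_def using p n by (auto intro!: powr_less_one)
  define c where "c = real p powr (- real n * real_of_int k)"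
  define f where "f = (\<lambda>i::nat. (a, k + int i))"
  have vol: "real p powr (- real n * real_of_int (snd (f i))) = c * q ^ i" for i
    unfolding f_def c_def q_def using p
    by (simp add: powr_realpow[symmetric] powr_powr powr_add[symmetric] algebra_simps)
  have "emeasure (haar p n) (qpn_ball p n a k) \<le> haar_outer p n (qpn_ball p n a k)"
    unfolding haar_def emeasure_measure_of_conv by simp
  also have "\<dots> \<le> (\<Sum>i. ennreal (real p powr (- real n * real_of_int (snd (f i)))))"
    unfolding haar_outer_def
  proof (rule INF_lower, safe)
    show "fst (f i) \<in> qpn p n" for i using a by (simp add: f_def)
    fix y assume "y \<in> qpn_ball p n a k"
    then show "y \<in> (\<Union>i. qpn_ball p n (fst (f i)) (snd (f i)))"
      by (intro UN_I[of 0]) (auto simp: f_def)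
  qed
  also have "\<dots> = ennreal (\<Sum>i. c * q ^ i)"
    unfolding vol using q by (intro suminf_ennreal2) (auto simp: c_def intro!: summable_mult summable_geometric)
  also have "(\<Sum>i. c * q ^ i) = c / (1 - q)"
    using q by (simp add: suminf_mult suminf_geometric divide_simps)
  finally show ?thesis unfolding c_def q_def .
qed

lemma qpn_zero_eq_INT_qpn_ball:
  assumes zero_in: "qpn_zero \<in> qpn p n"
  shows "{qpn_zero} = (\<Inter>m::nat. qpn_ball p n qpn_zero (int m))"
proof (intro equalityI subsetI)
  fix x assume x: "x \<in> (\<Inter>m::nat. qpn_ball p n qpn_zero (int m))"
  then have "x \<in> qpn p n" unfolding qpn_ball_def by auto
  moreover have "x i j = qpn_zero i j" if "i < n" for i j
  proof -
    have "x \<in> qpn_ball p n qpn_zero (int (nat (j + 1)))" using x by blast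
    then show ?thesis using that unfolding qpn_ball_def by auto
  qed
  moreover have "x i = qpn_zero i" if "i \<ge> n" for i
    using calculation(1) that unfolding qpn_def qpn_zero_def by auto
  ultimately have "x = qpn_zero" by (metis ext not_le)
  then show "x \<in> {qpn_zero}" by simp
qed (use zero_in in \<open>auto simp: qpn_ball_def\<close>)

lemma emeasure_haar_qpn_zero:
  assumes p: "p \<ge> 2" and n: "n \<ge> 1"
  shows "{qpn_zero} \<in> sets (haar p n)" "emeasure (haar p n) {qpn_zero} = 0"
proof -
  define q where "q = real p powr (- real n)"
  have q: "0 \<le> q" "q < 1" unfolding q_def using p n by (auto intro!: powr_less_one)
  have zero_in: "qpn_zero \<in> qpn p n" using p by (simp add: qpn_zero_in_qpn)
  show sets: "{qpn_zero} \<in> sets (haar p n)"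
    unfolding qpn_zero_eq_INT_qpn_ball[OF zero_in] using qpn_ball_in_sets_haar[OF zero_in] by (intro sets.countable_INT) auto
  have le: "emeasure (haar p n) {qpn_zero} \<le> ennreal (q ^ m / (1 - q))" for m :: nat
  proof -
    have "emeasure (haar p n) {qpn_zero} \<le> emeasure (haar p n) (qpn_ball p n qpn_zero (int m))"
      using qpn_zero_eq_INT_qpn_ball[OF zero_in] zero_in by (intro emeasure_mono qpn_ball_in_sets_haar) auto
    also have "\<dots> \<le> ennreal (real p powr (- real n * real_of_int (int m)) / (1 - q))"
      unfolding q_def by (rule emeasure_qpn_ball_le[OF p n zero_in])
    also have "real p powr (- real n * real_of_int (int m)) = q ^ m"
      unfolding q_def using p by (simp add: powr_realpow[symmetric] powr_powr)
    finally show ?thesis .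
  qed
  have "emeasure (haar p n) {qpn_zero} \<le> 0 + ennreal e" if e: "e > 0" for e
  proof -
    obtain m where "q ^ m < e * (1 - q)" using real_arch_pow_inv[of "e * (1 - q)" q] q e
      by (cases "q = 0") (auto intro: exI[of _ 1])
    then have "q ^ m / (1 - q) \<le> e" using q by (simp add: divide_simps)
    then show ?thesis using order_trans[OF le[of m]] ennreal_leI by simp
  qed
  then have "emeasure (haar p n) {qpn_zero} \<le> 0" by (rule ennreal_le_epsilon) simp
  then show "emeasure (haar p n) {qpn_zero} = 0" by simp
qed

lemma AE_haar_nonzero:
  assumes "p \<ge> 2" "n \<ge> 1" shows "AE y in haar p n. y \<noteq> qpn_zero"
  using emeasure_haar_qpn_zero[OF assms] by (intro AE_I'[of "{qpn_zero}"] null_setsI) auto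

definition qpn_truncate :: "nat \<Rightarrow> int \<Rightarrow> (nat \<Rightarrow> int \<Rightarrow> nat) \<Rightarrow> (nat \<Rightarrow> int \<Rightarrow> nat)" where
  "qpn_truncate n M y = (\<lambda>i j. if i < n \<and> j < M then y i j else 0)"

lemma qpn_truncate_in_qpn:
  assumes "p > 0" "y \<in> qpn p n" shows "qpn_truncate n M y \<in> qpn p n"
proof -
  have "\<And>i. i < n \<Longrightarrow> \<exists>N. \<forall>k<M. k < N \<longrightarrow> y i k = 0"
    using assms(2) unfolding qpn_def padic_def by blast
  then show ?thesis
    using assms unfolding qpn_def qpn_truncate_def padic_def padic_zero_def by (auto simp: fun_eq_iff)
qed

lemma countable_qpn_truncate_image: "countable (qpn_truncate n M ` qpn p n)"
proof -
  define F where "F = (\<lambda>L::nat. (\<lambda>h i j. if i < n \<and> - int L \<le> j \<and> j < M then h (i, j) else 0) `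
          (PiE ({..<n} \<times> {- int L..<M}) (\<lambda>_. {..<p})))"
  have "qpn_truncate n M y \<in> (\<Union>L. F L)" if y: "y \<in> qpn p n" for y
  proof -
    obtain N where N: "\<forall>i<n. digits_vanish_below (y i) N" using qpn_digits_vanish_below[OF y] ..
    define L where "L = nat (- N)"
    have "- int L \<le> N" unfolding L_def by simp
    then have NL: "\<forall>i<n. digits_vanish_below (y i) (- int L)"
      using N digits_vanish_below_mono by blast
    define h where "h = restrict (\<lambda>(i, j). y i j) ({..<n} \<times> {- int L..<M})"
    have "h \<in> PiE ({..<n} \<times> {- int L..<M}) (\<lambda>_. {..<p})"
      unfolding h_def using y unfolding qpn_def padic_def by auto
    moreover have "qpn_truncate n M y = (\<lambda>i j. if i < n \<and> - int L \<le> j \<and> j < M then h (i, j) else 0)"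
    proof (intro ext)
      fix i j
      show "qpn_truncate n M y i j = (if i < n \<and> - int L \<le> j \<and> j < M then h (i, j) else 0)"
      proof (cases "i < n \<and> j < M")
        case True
        then show ?thesis
          using NL by (cases "- int L \<le> j") (simp_all add: qpn_truncate_def h_def digits_vanish_below_def)
      qed (auto simp: qpn_truncate_def)
    qed
    ultimately show ?thesis unfolding F_def by blast
  qed
  then have "qpn_truncate n M ` qpn p n \<subseteq> (\<Union>L. F L)" by blast
  moreover have "countable (\<Union>L. F L)"
  proof (rule countable_UN)
    fix L :: nat
    have "finite (PiE ({..<n} \<times> {- int L..<M}) (\<lambda>_. {..<p}))" by (intro finite_PiE) auto
    then show "countable (F L)" unfolding F_def by (intro countable_finite finite_imageI)
  qed simp
  ultimately show ?thesis by (rule countable_subset)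
qed

lemma measurable_chi_p_qpn_dot:
  assumes p: "p \<ge> 2" and \<xi>: "\<xi> \<in> qpn p n"
  shows "(\<lambda>y. chi_p p (qpn_dot p n \<xi> y)) \<in> borel_measurable (haar p n)"
proof (rule borel_measurableI)
  obtain M where M: "\<And>y y'. y \<in> qpn p n \<Longrightarrow> y' \<in> qpn p n \<Longrightarrow>
      \<forall>i<n. digits_agree_below M (y i) (y' i) \<Longrightarrow>
      chi_p p (qpn_dot p n \<xi> y) = chi_p p (qpn_dot p n \<xi> y')"
    using chi_p_qpn_dot_locally_constant[OF p \<xi>] by metis
  let ?f = "\<lambda>y. chi_p p (qpn_dot p n \<xi> y)"
  fix S :: "complex set"
  let ?R = "{a \<in> qpn_truncate n M ` qpn p n. ?f a \<in> S}"
  have trunc: "qpn_truncate n M y \<in> qpn p n" if "y \<in> qpn p n" for y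
    using qpn_truncate_in_qpn[OF _ that] p by simp
  have eq: "?f -` S \<inter> space (haar p n) = \<Union> ((\<lambda>a. qpn_ball p n a M) ` ?R)"
  proof (intro equalityI subsetI)
    fix y assume "y \<in> ?f -` S \<inter> space (haar p n)"
    then have y: "y \<in> qpn p n" "?f y \<in> S" by (auto simp: space_haar)
    have "\<forall>i<n. digits_agree_below M (qpn_truncate n M y i) (y i)"
      by (simp add: digits_agree_below_def qpn_truncate_def)
    then have "?f (qpn_truncate n M y) = ?f y" using M[OF trunc[OF y(1)] y(1)] by blast
    moreover have "y \<in> qpn_ball p n (qpn_truncate n M y) M"
      using y(1) unfolding qpn_ball_def qpn_truncate_def by auto
    ultimately show "y \<in> \<Union> ((\<lambda>a. qpn_ball p n a M) ` ?R)"
      using y trunc by (intro UnionI[of "qpn_ball p n (qpn_truncate n M y) M"]) auto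
  next
    fix y assume "y \<in> \<Union> ((\<lambda>a. qpn_ball p n a M) ` ?R)"
    then obtain a where a: "a \<in> ?R" "y \<in> qpn_ball p n a M" by auto
    have y: "y \<in> qpn p n" using a(2) unfolding qpn_ball_def by auto
    have "\<forall>i<n. digits_agree_below M (y i) (a i)"
      using a(2) unfolding qpn_ball_def digits_agree_below_def by auto
    moreover have "a \<in> qpn p n" using a(1) trunc by blast
    ultimately have "?f y = ?f a" using M[OF y] by blast
    then show "y \<in> ?f -` S \<inter> space (haar p n)" using a y by (auto simp: space_haar)
  qed
  have "countable ?R" by (rule countable_subset[OF _ countable_qpn_truncate_image]) blast
  moreover have "(\<lambda>a. qpn_ball p n a M) ` ?R \<subseteq> sets (haar p n)"
    using trunc qpn_ball_in_sets_haar by blast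
  ultimately show "?f -` S \<inter> space (haar p n) \<in> sets (haar p n)"
    unfolding eq by (intro sets.countable_Union) auto
qed

section \<open>The Fourier transform of J\<close>

lemma AE_haar_radial_nonneg:
  assumes "p \<ge> 2" "n \<ge> 1" and J_nonneg: "\<And>r. r > 0 \<Longrightarrow> 0 \<le> J r"
  shows "AE y in haar p n. 0 \<le> J (qpn_norm p n y)"
  using AE_space AE_haar_nonzero[OF assms(1,2)]
  by eventually_elim (use assms qpn_norm_pos in \<open>auto simp: space_haar\<close>)

lemma integrable_chi_p_qpn_dot_mult:
  assumes p: "p \<ge> 2" and \<xi>: "\<xi> \<in> qpn p n"
    and J_int: "integrable (haar p n) (\<lambda>y. J (qpn_norm p n y))"
  shows "integrable (haar p n) (\<lambda>y. chi_p p (qpn_dot p n \<xi> y) * complex_of_real (J (qpn_norm p n y)))"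
proof (rule Bochner_Integration.integrable_bound[OF J_int])
  have "(\<lambda>y. J (qpn_norm p n y)) \<in> borel_measurable (haar p n)"
    using J_int by (rule borel_measurable_integrable)
  then show "(\<lambda>y. chi_p p (qpn_dot p n \<xi> y) * complex_of_real (J (qpn_norm p n y)))
               \<in> borel_measurable (haar p n)"
    using measurable_chi_p_qpn_dot[OF p \<xi>] by measurable
qed (simp add: chi_p_def norm_mult)

lemma Re_chi_p_mult: "Re (chi_p p d * complex_of_real a) = cos (2 * pi * padic_frac p d) * a"
  by (simp add: chi_p_def)

text \<open>For \<open>\<xi> \<notin> qpn p n\<close> the integrand need not be integrable; the integral is then \<open>0\<close>.\<close>
lemma Re_fourier_integral_le_1:
  assumes p: "p \<ge> 2" and n: "n \<ge> 1" and J_nonneg: "\<And>r. r > 0 \<Longrightarrow> 0 \<le> J r"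
    and J_int: "integrable (haar p n) (\<lambda>y. J (qpn_norm p n y))"
    and J_norm: "integral\<^sup>L (haar p n) (\<lambda>y. J (qpn_norm p n y)) = 1"
  shows "Re (CLINT y|haar p n. chi_p p (qpn_dot p n \<xi> y) * complex_of_real (J (qpn_norm p n y))) \<le> 1"
proof (cases "integrable (haar p n) (\<lambda>y. chi_p p (qpn_dot p n \<xi> y) * complex_of_real (J (qpn_norm p n y)))")
  case True
  let ?R = "\<lambda>y. Re (chi_p p (qpn_dot p n \<xi> y) * complex_of_real (J (qpn_norm p n y)))"
  have "AE y in haar p n. 0 \<le> J (qpn_norm p n y)"
    by (rule AE_haar_radial_nonneg[OF p n]) (rule J_nonneg)
  then have "AE y in haar p n. ?R y \<le> J (qpn_norm p n y)"
    unfolding Re_chi_p_mult by eventually_elim (auto intro: mult_right_mono[OF cos_le_one, simplified])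
  then have "integral\<^sup>L (haar p n) ?R \<le> 1"
    using integral_mono_AE[OF integrable_Re[OF True] J_int] J_norm by simp
  then show ?thesis using integral_Re[OF True] by simp
qed (simp add: not_integrable_integral_eq)

lemma Jhat_le_1:
  assumes "p \<ge> 2" "n \<ge> 1" "\<And>r. r > 0 \<Longrightarrow> 0 \<le> J r"
    "integrable (haar p n) (\<lambda>y. J (qpn_norm p n y))"
    "integral\<^sup>L (haar p n) (\<lambda>y. J (qpn_norm p n y)) = 1"
  shows "Jhat p n J r \<le> 1"
  unfolding Jhat_def Let_def using Re_fourier_integral_le_1[OF assms] .

text \<open>The character is trivial on \<open>\<parallel>y\<parallel> \<le> p^(k-1)\<close>; elsewhere \<open>(1 - cos) J \<le> 2 J\<close>.\<close>
lemma J_minus_Re_chi_p_mult_bounds: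
  assumes p: "p \<ge> 2" and n: "n \<ge> 1" and J_nonneg: "\<And>r. r > 0 \<Longrightarrow> 0 \<le> J r"
    and \<xi>: "\<xi> \<in> qpn p n" "qpn_norm p n \<xi> = real p powr real_of_int (1 - k)"
    and y: "y \<in> qpn p n" "y \<noteq> qpn_zero"
  defines "F \<equiv> J (qpn_norm p n y) - Re (chi_p p (qpn_dot p n \<xi> y) * complex_of_real (J (qpn_norm p n y)))"
  shows "0 \<le> F" "F \<le> 2 * J (qpn_norm p n y) * indicator {y. real p powr real_of_int k \<le> qpn_norm p n y} y"
proof -
  have J: "0 \<le> J (qpn_norm p n y)" using J_nonneg qpn_norm_pos[OF p n y] by simp
  obtain v where v: "qpn_norm p n y = real p powr real_of_int v" using qpn_norm_power_of_p[OF p n y] .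
  define c where "c = cos (2 * pi * padic_frac p (qpn_dot p n \<xi> y))"
  have F: "F = J (qpn_norm p n y) * (1 - c)"
    unfolding F_def Re_chi_p_mult c_def by (simp add: algebra_simps)
  have "0 \<le> 1 - c" "1 - c \<le> 2" unfolding c_def by simp_all
  then have F_bounds: "0 \<le> F" "F \<le> 2 * J (qpn_norm p n y)"
    using J mult_left_mono[of "1 - c" 2 "J (qpn_norm p n y)"] unfolding F by (simp_all add: mult.commute)
  then show "0 \<le> F" by simp
  show "F \<le> 2 * J (qpn_norm p n y) * indicator {y. real p powr real_of_int k \<le> qpn_norm p n y} y"
  proof (cases "v < k")
    case True
    have "qpn_norm p n \<xi> * qpn_norm p n y = real p powr real_of_int (1 - k + v)"
      unfolding \<xi>(2) v by (simp add: powr_add[symmetric])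
    also have "\<dots> \<le> real p powr 0" using True p by (intro powr_mono) auto
    finally have "chi_p p (qpn_dot p n \<xi> y) = 1" using chi_p_qpn_dot_eq_1[OF p \<xi>(1) y(1)] p by simp
    moreover have "c = Re (chi_p p (qpn_dot p n \<xi> y))" by (simp add: c_def chi_p_def)
    ultimately have "c = 1" by simp
    then show ?thesis using J unfolding F by simp
  next
    case False
    then have "real p powr real_of_int k \<le> qpn_norm p n y" using p unfolding v by simp
    then show ?thesis using F_bounds by simp
  qed
qed

lemma one_minus_Jhat_le_tail_integral:
  assumes p: "p \<ge> 2" and n: "n \<ge> 1" and J_nonneg: "\<And>r. r > 0 \<Longrightarrow> 0 \<le> J r"
    and J_int: "integrable (haar p n) (\<lambda>y. J (qpn_norm p n y))"
    and J_norm: "integral\<^sup>L (haar p n) (\<lambda>y. J (qpn_norm p n y)) = 1"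
    and x: "x \<in> qpn p n" "x \<noteq> qpn_zero"
  shows "ennreal (1 - Jhat p n J (real p * qpn_norm p n x powr (-1))) \<le>
         (\<integral>\<^sup>+ y. ennreal (2 * J (qpn_norm p n y)) * indicator {y. qpn_norm p n x \<le> qpn_norm p n y} y \<partial>haar p n)"
proof -
  obtain k where k: "qpn_norm p n x = real p powr real_of_int k" using qpn_norm_power_of_p[OF p n x] .
  have r: "real p * qpn_norm p n x powr (-1) = real p powr real_of_int (1 - k)"
    using p unfolding k by (simp add: powr_minus_divide powr_diff)
  define \<xi> where "\<xi> = (SOME \<xi>. \<xi> \<in> qpn p n \<and> qpn_norm p n \<xi> = real p * qpn_norm p n x powr (-1))"
  have \<xi>: "\<xi> \<in> qpn p n" "qpn_norm p n \<xi> = real p powr real_of_int (1 - k)"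
    using someI_ex[OF ex_qpn_norm_eq_power[OF p n, of "1 - k"]] unfolding \<xi>_def r by auto
  let ?h = "\<lambda>y. chi_p p (qpn_dot p n \<xi> y) * complex_of_real (J (qpn_norm p n y))"
  let ?F = "\<lambda>y. J (qpn_norm p n y) - Re (?h y)"
  have h_int: "integrable (haar p n) ?h" by (rule integrable_chi_p_qpn_dot_mult[OF p \<xi>(1) J_int])
  have F_int: "integrable (haar p n) ?F" using J_int integrable_Re[OF h_int] by (rule Bochner_Integration.integrable_diff)
  have "1 - Jhat p n J (real p * qpn_norm p n x powr (-1)) = integral\<^sup>L (haar p n) ?F"
    using Bochner_Integration.integral_diff[OF J_int integrable_Re[OF h_int]] integral_Re[OF h_int] J_norm
    unfolding Jhat_def Let_def \<xi>_def[symmetric] by simp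
  moreover have F_bounds: "AE y in haar p n. 0 \<le> ?F y \<and>
      ?F y \<le> 2 * J (qpn_norm p n y) * indicator {y. qpn_norm p n x \<le> qpn_norm p n y} y"
    using AE_space AE_haar_nonzero[OF p n]
    by eventually_elim (use J_minus_Re_chi_p_mult_bounds[OF p n J_nonneg \<xi>] k in \<open>auto simp: space_haar\<close>)
  then have "ennreal (integral\<^sup>L (haar p n) ?F) = (\<integral>\<^sup>+ y. ennreal (?F y) \<partial>haar p n)"
    by (intro nn_integral_eq_integral[OF F_int, symmetric]) auto
  moreover have "\<dots> \<le> (\<integral>\<^sup>+ y. ennreal (2 * J (qpn_norm p n y)) *
                         indicator {y. qpn_norm p n x \<le> qpn_norm p n y} y \<partial>haar p n)"
    using F_bounds
    by (intro nn_integral_mono_AE, eventually_elim) (auto simp: indicator_def intro: ennreal_leI)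
  ultimately show ?thesis by simp
qed

section \<open>Bounds on Ztilde\<close>

lemma geometric_average_exp_le:
  fixes q t b :: real and a :: "nat \<Rightarrow> real"
  assumes q: "0 \<le> q" "q < 1" and a: "\<And>j. a j \<le> 1" and t: "t \<ge> 0"
  shows "(1 - q) * (\<Sum>j. q ^ j * exp ((a j - 1) * t)) - exp ((b - 1) * t) \<le> t * (1 - b)"
proof -
  have e: "exp ((a j - 1) * t) \<le> 1" for j using a[of j] t by (simp add: mult_nonpos_nonneg)
  have "summable (\<lambda>j. q ^ j * exp ((a j - 1) * t))"
    by (rule summable_comparison_test[OF _ summable_geometric[of q]])
       (use q e in \<open>auto intro!: exI[of _ 0] mult_left_le\<close>)
  then have "(\<Sum>j. q ^ j * exp ((a j - 1) * t)) \<le> (\<Sum>j. q ^ j)"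
    using q e by (intro suminf_le summable_geometric) (auto intro: mult_left_le)
  also have "\<dots> = 1 / (1 - q)" using q by (simp add: suminf_geometric)
  finally have "(1 - q) * (\<Sum>j. q ^ j * exp ((a j - 1) * t)) \<le> 1" using q by (simp add: field_simps)
  moreover have "1 - exp ((b - 1) * t) \<le> t * (1 - b)"
    using exp_ge_add_one_self[of "(b - 1) * t"] by (simp add: algebra_simps)
  ultimately show ?thesis by linarith
qed

lemma Ztilde_le:
  assumes p: "p \<ge> 2" and n: "n \<ge> 1" and J_nonneg: "\<And>r. r > 0 \<Longrightarrow> 0 \<le> J r"
    and J_int: "integrable (haar p n) (\<lambda>y. J (qpn_norm p n y))"
    and J_norm: "integral\<^sup>L (haar p n) (\<lambda>y. J (qpn_norm p n y)) = 1"
    and t: "t \<ge> 0"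
  shows "Ztilde p n J x t \<le>
         qpn_norm p n x powr (- real n) * (t * (1 - Jhat p n J (real p * qpn_norm p n x powr (-1))))"
proof -
  define q where "q = real p powr (- real n)"
  have q: "0 \<le> q" "q < 1" unfolding q_def using p n by (auto intro!: powr_less_one)
  have pq: "real p powr (- real n * real j) = q ^ j" for j
    unfolding q_def using p by (simp add: powr_realpow[symmetric] powr_powr)
  show ?thesis
    unfolding Ztilde_def pq q_def[symmetric]
    by (intro mult_left_mono geometric_average_exp_le q Jhat_le_1[OF p n J_nonneg J_int J_norm] t powr_ge_zero)
qed

lemma Ztilde_le_of_tail_bound:
  assumes p: "p \<ge> 2" and n: "n \<ge> 1" and J_nonneg: "\<And>r. r > 0 \<Longrightarrow> 0 \<le> J r"
    and J_int: "integrable (haar p n) (\<lambda>y. J (qpn_norm p n y))"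
    and J_norm: "integral\<^sup>L (haar p n) (\<lambda>y. J (qpn_norm p n y)) = 1"
    and x: "x \<in> qpn p n" "x \<noteq> qpn_zero" and t: "t \<ge> 0" and K: "K \<ge> 0"
    and tail: "(\<integral>\<^sup>+ y. ennreal (2 * J (qpn_norm p n y)) *
                 indicator {y. qpn_norm p n x \<le> qpn_norm p n y} y \<partial>haar p n) \<le> ennreal K"
  shows "Ztilde p n J x t \<le> t * K * qpn_norm p n x powr (- real n)"
proof -
  have "ennreal (1 - Jhat p n J (real p * qpn_norm p n x powr (-1))) \<le> ennreal K"
    using one_minus_Jhat_le_tail_integral[OF p n J_nonneg J_int J_norm x] tail by (rule order_trans)
  then have "1 - Jhat p n J (real p * qpn_norm p n x powr (-1)) \<le> K" using K by (simp add: ennreal_le_iff)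
  then have "qpn_norm p n x powr (- real n) * (t * (1 - Jhat p n J (real p * qpn_norm p n x powr (-1))))
             \<le> qpn_norm p n x powr (- real n) * (t * K)"
    using t by (intro mult_left_mono) auto
  then show ?thesis using Ztilde_le[OF p n J_nonneg J_int J_norm t, of x] by (simp add: algebra_simps)
qed

lemma Ztilde_le_2t:
  assumes p: "p \<ge> 2" and n: "n \<ge> 1" and J_nonneg: "\<And>r. r > 0 \<Longrightarrow> 0 \<le> J r"
    and J_int: "integrable (haar p n) (\<lambda>y. J (qpn_norm p n y))"
    and J_norm: "integral\<^sup>L (haar p n) (\<lambda>y. J (qpn_norm p n y)) = 1"
    and x: "x \<in> qpn p n" "x \<noteq> qpn_zero" and t: "t \<ge> 0"
  shows "Ztilde p n J x t \<le> 2 * t * qpn_norm p n x powr (- real n)"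
proof -
  have "(\<integral>\<^sup>+ y. ennreal (2 * J (qpn_norm p n y)) *
            indicator {y. qpn_norm p n x \<le> qpn_norm p n y} y \<partial>haar p n)
        \<le> (\<integral>\<^sup>+ y. ennreal (2 * J (qpn_norm p n y)) \<partial>haar p n)"
    by (intro nn_integral_mono) (simp add: indicator_def)
  also have "\<dots> = ennreal (integral\<^sup>L (haar p n) (\<lambda>y. 2 * J (qpn_norm p n y)))"
    using AE_haar_radial_nonneg[OF p n, of J] J_nonneg
    by (intro nn_integral_eq_integral integrable_mult_right J_int) auto
  also have "\<dots> = ennreal 2" using J_norm by simp
  finally show ?thesis
    using Ztilde_le_of_tail_bound[OF p n J_nonneg J_int J_norm x t, of 2] by (simp add: mult.commute)
qed

text \<open>The shell \<open>\<parallel>y\<parallel> = p^(k+i)\<close> lies in the ball of that radius around \<open>0\<close>.\<close>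
lemma radial_tail_le_suminf_indicator:
  assumes p: "p \<ge> 2" and n: "n \<ge> 1"
    and J_le: "\<And>y. y \<in> qpn p n \<Longrightarrow> y \<noteq> qpn_zero \<Longrightarrow> J (qpn_norm p n y) \<le> f (qpn_norm p n y)"
    and y: "y \<in> qpn p n"
  shows "ennreal (2 * J (qpn_norm p n y)) * indicator {y. real p powr real_of_int k \<le> qpn_norm p n y} y
         \<le> (\<Sum>i. ennreal (2 * f (real p powr real_of_int (k + int i))) *
                  indicator (qpn_ball p n qpn_zero (- (k + int i))) y)"
    (is "_ \<le> suminf ?g")
proof (cases "real p powr real_of_int k \<le> qpn_norm p n y")
  case True
  then have y0: "y \<noteq> qpn_zero" using p qpn_norm_qpn_zero[OF n] by auto
  obtain v where v: "qpn_norm p n y = real p powr real_of_int v" using qpn_norm_power_of_p[OF p n y y0] .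
  define i0 where "i0 = nat (v - k)"
  have "k \<le> v" using True p unfolding v by simp
  then have ki: "k + int i0 = v" unfolding i0_def by simp
  have "y \<in> qpn_ball p n qpn_zero (- (k + int i0))"
    unfolding ki using qpn_ball_of_qpn_norm_le[OF p y, of v] v by simp
  then have "ennreal (2 * J (qpn_norm p n y)) \<le> ?g i0"
    using J_le[OF y y0] unfolding ki v by (simp add: ennreal_leI)
  also have "?g i0 = sum ?g {i0}" by (subst sum.insert) simp_all
  also have "\<dots> \<le> suminf ?g" by (rule sum_le_suminf) (auto intro: summableI)
  finally show ?thesis using True by simp
qed simp

lemma tail_nn_integral_le_suminf:
  assumes p: "p \<ge> 2" and n: "n \<ge> 1"
    and J_le: "\<And>y. y \<in> qpn p n \<Longrightarrow> y \<noteq> qpn_zero \<Longrightarrow> J (qpn_norm p n y) \<le> f (qpn_norm p n y)"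
  shows "(\<integral>\<^sup>+ y. ennreal (2 * J (qpn_norm p n y)) *
            indicator {y. real p powr real_of_int k \<le> qpn_norm p n y} y \<partial>haar p n)
         \<le> (\<Sum>i. ennreal (2 * f (real p powr real_of_int (k + int i)) *
                  (real p powr real_of_int (k + int i)) powr real n / (1 - real p powr (- real n))))"
proof -
  define r where "r = (\<lambda>i::nat. real p powr real_of_int (k + int i))"
  define Ball where "Ball = (\<lambda>i::nat. qpn_ball p n qpn_zero (- (k + int i)))"
  have zero_in: "qpn_zero \<in> qpn p n" using p by (simp add: qpn_zero_in_qpn)
  have Ball_sets: "Ball i \<in> sets (haar p n)" for i
    unfolding Ball_def by (rule qpn_ball_in_sets_haar[OF zero_in])
  have vol: "0 \<le> r i powr real n / (1 - real p powr (- real n))" for i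
    using p n powr_less_one[of "real p" "- real n"] by simp
  have "(\<integral>\<^sup>+ y. ennreal (2 * J (qpn_norm p n y)) *
                indicator {y. real p powr real_of_int k \<le> qpn_norm p n y} y \<partial>haar p n)
        \<le> (\<integral>\<^sup>+ y. (\<Sum>i. ennreal (2 * f (r i)) * indicator (Ball i) y) \<partial>haar p n)"
    using radial_tail_le_suminf_indicator[where J = J and f = f, OF p n J_le] unfolding r_def Ball_def
    by (intro nn_integral_mono) (simp add: space_haar)
  also have "\<dots> = (\<Sum>i. ennreal (2 * f (r i)) * emeasure (haar p n) (Ball i))"
    using Ball_sets by (simp add: nn_integral_suminf nn_integral_cmult_indicator)
  also have "\<dots> \<le> (\<Sum>i. ennreal (2 * f (r i)) * ennreal (r i powr real n / (1 - real p powr (- real n))))"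
  proof (intro suminf_le mult_left_mono summableI)
    fix i
    have "- real n * real_of_int (- (k + int i)) = real_of_int (k + int i) * real n"
      by (simp add: algebra_simps)
    then show "emeasure (haar p n) (Ball i) \<le> ennreal (r i powr real n / (1 - real p powr (- real n)))"
      using emeasure_qpn_ball_le[OF p n zero_in, of "- (k + int i)"] p
      unfolding Ball_def r_def by (simp add: powr_powr)
  qed auto
  also have "\<dots> = (\<Sum>i. ennreal (2 * f (r i) * r i powr real n / (1 - real p powr (- real n))))"
    using vol by (simp add: ennreal_mult''[symmetric])
  finally show ?thesis unfolding r_def .
qed

lemma summable_powr_exp_neg_powr:
  fixes P e c :: real
  assumes P: "P \<ge> 2" and c: "c > 0"
  shows "summable (\<lambda>i::nat. P powr (real i * e) * exp (- c * (P powr real i - 1)))"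
proof -
  define b where "b = (\<lambda>i::nat. P powr (real i * e) * exp (- c * (P powr real i - 1)))"
  have b_nonneg: "b i \<ge> 0" for i unfolding b_def by simp
  obtain N :: nat where N: "ln (2 * P powr e) / c \<le> real N" using real_arch_simple by blast
  have "summable b"
  proof (rule summable_ratio_test[of "1/2" N])
    fix i assume i: "N \<le> i"
    have "real i < 2 ^ i" using less_exp[of i] by (metis of_nat_less_iff of_nat_numeral of_nat_power)
    also have "(2::real) ^ i \<le> P powr real i" using P by (simp add: powr_realpow power_mono)
    also have "P powr real i \<le> P powr real i * (P - 1)" using P by simp
    also have "\<dots> = P powr real (Suc i) - P powr real i" using P by (simp add: powr_add algebra_simps)
    finally have gap: "real i \<le> P powr real (Suc i) - P powr real i" by simp
    have "ln (2 * P powr e) \<le> c * real i"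
      using N i c by (simp add: divide_le_eq mult.commute order_trans mult_left_mono)
    also have "\<dots> \<le> c * (P powr real (Suc i) - P powr real i)" using gap c by simp
    finally have "exp (- c * (P powr real (Suc i) - P powr real i)) \<le> exp (- ln (2 * P powr e))"
      by simp
    also have "\<dots> = 1 / (2 * P powr e)" using P by (simp add: exp_minus inverse_eq_divide)
    finally have ratio: "P powr e * exp (- c * (P powr real (Suc i) - P powr real i)) \<le> 1/2"
      using P by (simp add: field_simps)
    have "b (Suc i) = (P powr e * exp (- c * (P powr real (Suc i) - P powr real i))) * b i"
      unfolding b_def using P by (simp add: powr_add[symmetric] exp_add[symmetric] algebra_simps)
    also have "\<dots> \<le> 1/2 * b i" using ratio b_nonneg[of i] by (intro mult_right_mono) auto
    finally show "norm (b (Suc i)) \<le> 1/2 * norm (b i)" using b_nonneg[of i] b_nonneg[of "Suc i"] by simp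
  qed simp
  then show ?thesis unfolding b_def .
qed

lemma powr_mult_exp_le:
  fixes R s a C e :: real
  assumes a: "0 < a" "a \<le> R" and s: "1 \<le> s" and C: "C \<ge> 0"
  shows "(R * s) powr e * exp (- C * (R * s)) \<le> R powr e * exp (- C * R) * (s powr e * exp (- C * a * (s - 1)))"
proof -
  have "a * (s - 1) \<le> R * (s - 1)" using a s by (intro mult_right_mono) auto
  then have "C * R + C * a * (s - 1) \<le> C * (R * s)"
    using C mult_left_mono[of "a * (s - 1)" "R * (s - 1)" C] by (simp add: algebra_simps)
  then have "exp (- C * (R * s)) \<le> exp (- C * R) * exp (- C * a * (s - 1))"
    by (simp add: exp_add[symmetric])
  then show ?thesis
    using a s by (simp add: powr_mult mult_left_mono algebra_simps)
qed

lemma suminf_shell_terms_le: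
  fixes P B C \<gamma> a R q :: real and n :: nat and k :: int
  assumes P: "P \<ge> 2" and a: "0 < a" "a \<le> R" and k: "R = P powr real_of_int k"
    and B: "B \<ge> 0" and C: "C > 0" and q: "q < 1"
  shows "(\<Sum>i. ennreal (2 * (B * (P powr real_of_int (k + int i)) powr \<gamma> *
                              exp (- C * P powr real_of_int (k + int i))) *
                         (P powr real_of_int (k + int i)) powr real n / (1 - q)))
         \<le> ennreal (2 * B / (1 - q) * R powr (real n + \<gamma>) * exp (- C * R) *
                    (\<Sum>i. P powr (real i * (real n + \<gamma>)) * exp (- (C * a) * (P powr real i - 1))))"
proof -
  define e where "e = real n + \<gamma>"
  define b where "b = (\<lambda>i::nat. P powr (real i * e) * exp (- (C * a) * (P powr real i - 1)))"
  define K where "K = 2 * B / (1 - q) * R powr e * exp (- C * R)"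
  have K: "K \<ge> 0" unfolding K_def using B q by simp
  have term_le: "2 * (B * r powr \<gamma> * exp (- C * r)) * r powr real n / (1 - q) \<le> K * b i"
    if r: "r = P powr real_of_int (k + int i)" for r i
  proof -
    have ri: "r = R * P powr real i" unfolding r k using P by (simp add: powr_add[symmetric])
    have "r powr \<gamma> * exp (- C * r) * r powr real n = r powr e * exp (- C * r)"
      unfolding e_def using P r by (simp add: powr_add)
    also have "\<dots> \<le> R powr e * exp (- C * R) * ((P powr real i) powr e * exp (- C * a * (P powr real i - 1)))"
      unfolding ri using a P C by (intro powr_mult_exp_le ge_one_powr_ge_zero) auto
    finally show ?thesis
      using B q unfolding K_def b_def
      by (simp add: powr_powr divide_right_mono mult_left_mono algebra_simps)
  qed
  have "summable b" unfolding b_def using summable_powr_exp_neg_powr[OF P, of "C * a" e] C a by simp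
  moreover have "b i \<ge> 0" for i unfolding b_def by simp
  ultimately have "(\<Sum>i. ennreal (K * b i)) = ennreal (K * suminf b)"
    using K by (simp add: suminf_ennreal2 suminf_mult)
  moreover have "(\<Sum>i. ennreal (2 * (B * (P powr real_of_int (k + int i)) powr \<gamma> *
                              exp (- C * P powr real_of_int (k + int i))) *
                         (P powr real_of_int (k + int i)) powr real n / (1 - q)))
                 \<le> (\<Sum>i. ennreal (K * b i))"
    using term_le by (intro suminf_le summableI ennreal_leI) auto
  ultimately show ?thesis unfolding K_def b_def e_def by simp
qed

lemma Ztilde_le_exp_decay:
  fixes p n :: nat and J :: "real \<Rightarrow> real" and B C\<^sub>1 \<gamma> :: real and l :: int
  assumes p: "p \<ge> 2" and n: "n \<ge> 1" and J_nonneg: "\<And>r. r > 0 \<Longrightarrow> 0 \<le> J r"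
    and J_int: "integrable (haar p n) (\<lambda>y. J (qpn_norm p n y))"
    and J_norm: "integral\<^sup>L (haar p n) (\<lambda>y. J (qpn_norm p n y)) = 1"
    and B: "B > 0" and C1: "C\<^sub>1 > 0"
    and J_le: "\<And>y. y \<in> qpn p n \<Longrightarrow> y \<noteq> qpn_zero \<Longrightarrow>
        J (qpn_norm p n y) \<le> B * qpn_norm p n y powr \<gamma> * exp (- C\<^sub>1 * qpn_norm p n y)"
  shows "\<exists>C\<^sub>0 > 0. \<forall>x \<in> qpn p n. \<forall>t > 0. qpn_norm p n x > real p powr real_of_int l \<longrightarrow>
           Ztilde p n J x t \<le> C\<^sub>0 * t * qpn_norm p n x powr \<gamma> * exp (- C\<^sub>1 * qpn_norm p n x)"
proof -
  define P where "P = real p"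
  have P: "P \<ge> 2" unfolding P_def using p by simp
  define q where "q = P powr (- real n)"
  have q: "0 \<le> q" "q < 1" unfolding q_def using P n by (auto intro!: powr_less_one)
  define a where "a = P powr real_of_int l"
  have a: "a > 0" unfolding a_def using P by simp
  define S where "S = (\<Sum>i. P powr (real i * (real n + \<gamma>)) * exp (- (C\<^sub>1 * a) * (P powr real i - 1)))"
  have S: "S \<ge> 1"
    using sum_le_suminf[OF summable_powr_exp_neg_powr[OF P, of "C\<^sub>1 * a" "real n + \<gamma>"], of "{0}"] C1 a P
    unfolding S_def by simp
  define C\<^sub>0 where "C\<^sub>0 = 2 * B * S / (1 - q)"
  have "Ztilde p n J x t \<le> C\<^sub>0 * t * qpn_norm p n x powr \<gamma> * exp (- C\<^sub>1 * qpn_norm p n x)"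
    if x: "x \<in> qpn p n" and t: "t > 0" and xl: "qpn_norm p n x > real p powr real_of_int l" for x t
  proof -
    define R where "R = qpn_norm p n x"
    have x0: "x \<noteq> qpn_zero" using xl qpn_norm_qpn_zero[OF n] p by auto
    obtain k where k: "R = P powr real_of_int k"
      using qpn_norm_power_of_p[OF p n x x0] unfolding R_def P_def by blast
    have aR: "a \<le> R" using xl unfolding R_def a_def P_def by simp
    define K where "K = 2 * B / (1 - q) * R powr (real n + \<gamma>) * exp (- C\<^sub>1 * R) * S"
    have K: "K \<ge> 0" unfolding K_def using B q S by simp
    have "(\<integral>\<^sup>+ y. ennreal (2 * J (qpn_norm p n y)) *
              indicator {y. qpn_norm p n x \<le> qpn_norm p n y} y \<partial>haar p n) \<le> ennreal K"
      using order_trans[OF tail_nn_integral_le_suminf[where f = "\<lambda>r. B * r powr \<gamma> * exp (- C\<^sub>1 * r)",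
            OF p n J_le, of k] suminf_shell_terms_le[where B = B and n = n and \<gamma> = \<gamma>, OF P a aR k _ C1 q(2), unfolded P_def q_def]]
        k B unfolding R_def K_def S_def P_def q_def by simp
    then have "Ztilde p n J x t \<le> t * K * R powr (- real n)"
      unfolding R_def using Ztilde_le_of_tail_bound[OF p n J_nonneg J_int J_norm x x0] t K by simp
    also have "\<dots> = C\<^sub>0 * t * R powr \<gamma> * exp (- C\<^sub>1 * R)"
      using k P unfolding K_def C\<^sub>0_def by (simp add: powr_add[symmetric] algebra_simps)
    finally show ?thesis unfolding R_def .
  qed
  moreover have "C\<^sub>0 > 0" unfolding C\<^sub>0_def using B S q by simp
  ultimately show ?thesis by blast
qed

theorem proposition2:
  fixes p n :: nat and J :: "real \<Rightarrow> real" and A B C\<^sub>1 \<gamma> :: real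
  assumes "prime p" and "n \<ge> 1"
    and J_cont: "continuous_on {0<..} J"
    and J_pos: "\<And>r. r > 0 \<Longrightarrow> J r > 0"
    and J_int: "integrable (haar p n) (\<lambda>x. J (qpn_norm p n x))"
    and J_norm: "integral\<^sup>L (haar p n) (\<lambda>x. J (qpn_norm p n x)) = 1"
    and constants: "A > 0" "B > 0" "C\<^sub>1 > 0" "\<gamma> > - real n"
    and exp_type: "\<And>x. x \<in> qpn p n \<Longrightarrow> x \<noteq> qpn_zero \<Longrightarrow>
        A * qpn_norm p n x powr \<gamma> * exp (- C\<^sub>1 * qpn_norm p n x) \<le> J (qpn_norm p n x) \<and>
        J (qpn_norm p n x) \<le> B * qpn_norm p n x powr \<gamma> * exp (- C\<^sub>1 * qpn_norm p n x)"
  shows "(\<forall>x \<in> qpn p n. \<forall>t > 0. x \<noteq> qpn_zero \<longrightarrow>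
            Ztilde p n J x t \<le> 2 * t * qpn_norm p n x powr (- real n))
       \<and> (\<gamma> < 0 \<longrightarrow>
            (\<forall>l :: int. \<exists>C\<^sub>0 > 0. \<forall>x \<in> qpn p n. \<forall>t > 0.
               qpn_norm p n x > real p powr real_of_int l \<longrightarrow>
               Ztilde p n J x t \<le> C\<^sub>0 * t * qpn_norm p n x powr \<gamma> * exp (- C\<^sub>1 * qpn_norm p n x)))"
proof -
  have p: "p \<ge> 2" using \<open>prime p\<close> by (rule prime_ge_2_nat)
  have J_nonneg: "\<And>r. r > 0 \<Longrightarrow> 0 \<le> J r" using J_pos less_imp_le by blast
  have J_le: "\<And>x. x \<in> qpn p n \<Longrightarrow> x \<noteq> qpn_zero \<Longrightarrow>
      J (qpn_norm p n x) \<le> B * qpn_norm p n x powr \<gamma> * exp (- C\<^sub>1 * qpn_norm p n x)"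
    using exp_type by blast
  show ?thesis
  proof (intro conjI impI allI ballI)
    show "Ztilde p n J x t \<le> 2 * t * qpn_norm p n x powr (- real n)"
      if "x \<in> qpn p n" "t > 0" "x \<noteq> qpn_zero" for x t
      using Ztilde_le_2t[OF p \<open>n \<ge> 1\<close> J_nonneg J_int J_norm] that by simp
    show "\<exists>C\<^sub>0 > 0. \<forall>x \<in> qpn p n. \<forall>t > 0. qpn_norm p n x > real p powr real_of_int l \<longrightarrow>
        Ztilde p n J x t \<le> C\<^sub>0 * t * qpn_norm p n x powr \<gamma> * exp (- C\<^sub>1 * qpn_norm p n x)" for l
      by (rule Ztilde_le_exp_decay[OF p \<open>n \<ge> 1\<close> J_nonneg J_int J_norm \<open>B > 0\<close> \<open>C\<^sub>1 > 0\<close> J_le])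
  qed
qed

end
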